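(* Let $G$ be a bipartite graph with left degree $D$ that has $(\tfrac 2 3 D + 2)$-expansion up to $K+1$. Let $Y$ be a set of right nodes with $\#Y \le 2K+1$, and let $P$ be a set of left nodes such that every $x \in P$ satisfies $\#({\mathcal N}(x) \cap Y) \ge D/3$. Then $\#P \le K$.
   Context: ${\mathcal N}(x)$ is the set of neighbors of $x$. Left degree $D$ means every left node has exactly $D$ neighbors. A graph has $e$-expansion up to $K$ if every set $S$ of left nodes with $\#S\le K$ has at least $e\,\#S$ neighbors. *)

theory Defs
  imports Complex_Main
begin

definition bipartite :: "'a set \<Rightarrow> 'b set \<Rightarrow> ('a \<Rightarrow> 'b set) \<Rightarrow> bool" where
  "bipartite L R N \<longleftrightarrow> (\<forall>x\<in>L. N x \<subseteq> R)"

definition left_degree :: "'a set \<Rightarrow> ('a \<Rightarrow> 'b set) \<Rightarrow> nat \<Rightarrow> bool" where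
  "left_degree L N D \<longleftrightarrow> (\<forall>x\<in>L. finite (N x) \<and> card (N x) = D)"

definition has_expansion :: "'a set \<Rightarrow> ('a \<Rightarrow> 'b set) \<Rightarrow> real \<Rightarrow> nat \<Rightarrow> bool" where
  "has_expansion L N e K \<longleftrightarrow>
     (\<forall>S. S \<subseteq> L \<and> finite S \<and> card S \<le> K \<longrightarrow> real (card (\<Union>x\<in>S. N x)) \<ge> e * real (card S))"

end

theory Submission
  imports Defs
begin

(* Suppose P had K + 1 elements S. Each x in S has at most 2D/3 neighbours outside Y, so
   S has at most #Y + (2D/3)(K + 1) neighbours, while expansion forces at least
   (2D/3 + 2)(K + 1) of them. Hence #Y >= 2K + 2, contradicting #Y <= 2K + 1. *)

lemma finite_card_le_if_no_subset_card_Suc: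
  assumes "\<And>S. S \<subseteq> P \<Longrightarrow> card S = Suc K \<Longrightarrow> False"
  shows "finite P \<and> card P \<le> K"
proof (rule ccontr)
  assume "\<not> (finite P \<and> card P \<le> K)"
  then obtain S where "S \<subseteq> P" "card S = Suc K"
    by (metis infinite_arbitrarily_large not_less_eq_eq obtain_subset_with_card_n)
  with assms show False .
qed

lemma card_Diff_le_if_card_Int_ge:
  assumes "finite A" and "real (card (A \<inter> Y)) \<ge> c"
  shows "real (card (A - Y)) \<le> real (card A) - c"
  using assms card_Int_Diff[OF \<open>finite A\<close>, of Y] by simp

lemma card_UN_le_card_add_outside:
  assumes "finite Y" and "finite S"
    and "\<And>x. x \<in> S \<Longrightarrow> finite (N x)"
    and outside: "\<And>x. x \<in> S \<Longrightarrow> real (card (N x - Y)) \<le> c"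
  shows "real (card (\<Union>x\<in>S. N x)) \<le> real (card Y) + c * real (card S)"
proof -
  have "card (\<Union>x\<in>S. N x) \<le> card (Y \<union> (\<Union>x\<in>S. N x - Y))"
    by (rule card_mono) (use assms in auto)
  also have "\<dots> \<le> card Y + card (\<Union>x\<in>S. N x - Y)"
    by (rule card_Un_le)
  also have "\<dots> \<le> card Y + (\<Sum>x\<in>S. card (N x - Y))"
    by (rule add_left_mono, rule card_UN_le[OF \<open>finite S\<close>])
  finally have "real (card (\<Union>x\<in>S. N x)) \<le> real (card Y) + (\<Sum>x\<in>S. real (card (N x - Y)))"
    by (metis of_nat_add of_nat_le_iff of_nat_sum)
  also have "(\<Sum>x\<in>S. real (card (N x - Y))) \<le> (\<Sum>x\<in>S. c)"
    using outside by (rule sum_mono)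
  finally show ?thesis
    by (simp add: mult.commute)
qed

theorem lemma5:
  fixes L :: "'a set" and R :: "'b set" and N :: "'a \<Rightarrow> 'b set"
    and D K :: nat and Y :: "'b set" and P :: "'a set"
  assumes "bipartite L R N"
    and "left_degree L N D"
    and "has_expansion L N (2/3 * real D + 2) (K + 1)"
    and "Y \<subseteq> R" and "finite Y" and "card Y \<le> 2 * K + 1"
    and "P \<subseteq> L"
    and "\<forall>x\<in>P. real (card (N x \<inter> Y)) \<ge> real D / 3"
  shows "finite P \<and> card P \<le> K"
proof (rule finite_card_le_if_no_subset_card_Suc)
  fix S
  assume S: "S \<subseteq> P" "card S = Suc K"
  then have "finite S" and "S \<subseteq> L"
    using card.infinite \<open>P \<subseteq> L\<close> by fastforce+
  have degree: "finite (N x) \<and> card (N x) = D" if "x \<in> S" for x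
    using assms(2) \<open>S \<subseteq> L\<close> that unfolding left_degree_def by blast
  have outside: "real (card (N x - Y)) \<le> 2/3 * real D" if "x \<in> S" for x
    using card_Diff_le_if_card_Int_ge[of "N x" "real D / 3" Y] degree[OF that] assms(8) S(1) that
    by auto
  have "(2/3 * real D + 2) * real (card S) \<le> real (card (\<Union>x\<in>S. N x))"
    using assms(3) \<open>S \<subseteq> L\<close> \<open>finite S\<close> S(2) unfolding has_expansion_def
    by (metis Suc_eq_plus1 order_refl)
  also have "\<dots> \<le> real (card Y) + 2/3 * real D * real (card S)"
    using card_UN_le_card_add_outside[OF \<open>finite Y\<close> \<open>finite S\<close>] degree outside by blast
  finally show False
    using S(2) assms(6) by (simp add: algebra_simps)
qed

end
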